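(* Let $(L,d)$ be a metric locale without isolated points. If $L$ is extremally disconnected, then $L$ is Boolean (i.e. $a\vee a^*=1$ for every $a\in L$).
   Context: A frame (locale) $L$ is a complete lattice in which finite meets distribute over arbitrary joins; $a^*$ denotes the pseudocomplement of $a$ (largest $x$ with $x\wedge a=0$). $L$ is extremally disconnected if $a^*\vee a^{**}=1$ for all $a\in L$. A diameter on $L$ is a map $d\colon L\to[0,+\infty]$ with (D1) $d(0)=0$; (D2) $a\le b\Rightarrow d(a)\le d(b)$; (D3) $a\wedge b\neq 0\Rightarrow d(a\vee b)\le d(a)+d(b)$; (D4) for every $\varepsilon>0$, $\bigvee\{a\in L\mid d(a)<\varepsilon\}=1$. Write $b\lhd_\varepsilon a$ if for every $c\in L$ with $d(c)<\varepsilon$, $c\wedge b\ne0$ implies $c\le a$. The diameter is admissible if $a=\bigvee\{b\in L\mid b\lhd_\varepsilon a \text{ for some }\varepsilon>0\}$ for all $a\in L$; a metric locale is a pair $(L,d)$ with $d$ an admissible diameter. A sublocale of $L$ is a subset closed under arbitrary meets and such that $a\to s$ lies in it whenever $s$ does; the open sublocale of $a$ is $\mathfrak{o}(a)=\{a\to b\mid b\in L\}$. A point of $L$ is $p\ne1$ such that $a\wedge b\le p$ implies $a\le p$ or $b\le p$; it is isolated if the sublocale $\{1,p\}$ equals $\mathfrak{o}(a)$ for some $a\in L$. *)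

theory Defs
  imports "HOL-Analysis.Analysis"
begin

definition frame_law :: "('a::complete_lattice) itself \<Rightarrow> bool" where
  "frame_law _ \<longleftrightarrow> (\<forall>(a::'a) S. inf a (Sup S) = Sup ((\<lambda>s. inf a s) ` S))"

definition pcompl :: "'a::complete_lattice \<Rightarrow> 'a" where
  "pcompl a = Sup {x. inf x a = bot}"

definition fimp :: "'a::complete_lattice \<Rightarrow> 'a \<Rightarrow> 'a" where
  "fimp a b = Sup {x. inf x a \<le> b}"

definition extremally_disconnected :: "('a::complete_lattice) itself \<Rightarrow> bool" where
  "extremally_disconnected _ \<longleftrightarrow> (\<forall>a::'a. sup (pcompl a) (pcompl (pcompl a)) = top)"

definition boolean_frame :: "('a::complete_lattice) itself \<Rightarrow> bool" where
  "boolean_frame _ \<longleftrightarrow> (\<forall>a::'a. sup a (pcompl a) = top)"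

definition diameter :: "('a::complete_lattice \<Rightarrow> ennreal) \<Rightarrow> bool" where
  "diameter d \<longleftrightarrow>
     d bot = 0
   \<and> (\<forall>a b. a \<le> b \<longrightarrow> d a \<le> d b)
   \<and> (\<forall>a b. inf a b \<noteq> bot \<longrightarrow> d (sup a b) \<le> d a + d b)
   \<and> (\<forall>\<epsilon>::real. \<epsilon> > 0 \<longrightarrow> Sup {a. d a < ennreal \<epsilon>} = top)"

definition wbelow :: "('a::complete_lattice \<Rightarrow> ennreal) \<Rightarrow> real \<Rightarrow> 'a \<Rightarrow> 'a \<Rightarrow> bool" where
  "wbelow d \<epsilon> b a \<longleftrightarrow> (\<forall>c. d c < ennreal \<epsilon> \<longrightarrow> inf c b \<noteq> bot \<longrightarrow> c \<le> a)"

definition admissible :: "('a::complete_lattice \<Rightarrow> ennreal) \<Rightarrow> bool" where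
  "admissible d \<longleftrightarrow> (\<forall>a. a = Sup {b. \<exists>\<epsilon>>0. wbelow d \<epsilon> b a})"

definition metric_locale :: "('a::complete_lattice \<Rightarrow> ennreal) \<Rightarrow> bool" where
  "metric_locale d \<longleftrightarrow> frame_law TYPE('a) \<and> diameter d \<and> admissible d"

definition open_sublocale :: "'a::complete_lattice \<Rightarrow> 'a set" where
  "open_sublocale a = {fimp a b | b. True}"

definition is_point :: "'a::complete_lattice \<Rightarrow> bool" where
  "is_point p \<longleftrightarrow> p \<noteq> top \<and> (\<forall>a b. inf a b \<le> p \<longrightarrow> a \<le> p \<or> b \<le> p)"

definition isolated_point :: "'a::complete_lattice \<Rightarrow> bool" where
  "isolated_point p \<longleftrightarrow> is_point p \<and> (\<exists>a. {top, p} = open_sublocale a)"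

end

theory Submission
  imports Defs
begin

(* Let h = (a** -> a); it suffices to show h = 1.  Admissibility of d gives an increasing
   sequence g of complemented elements with join a (double pseudocomplements of the parts of a
   lying uniformly inside a at radius 1/(m+1)), and every w not below h meets g beyond every
   level.  For each radius 1/(k+1) choose by Zorn a maximal family of small elements not below
   h, no two of them near each other, and cut from each member two disjoint pieces at levels of
   g above everything chosen earlier nearby.  The pieces collect into disjoint U and V met by
   every w not below h, so U* and V* lie below h, while extremal disconnectedness gives
   U* join V* = 1.  This is the localic form of splitting a sequence converging to a
   non-isolated point into two halves. *)

lemma inf_le_eq_bot:
  fixes a :: "'a::bounded_lattice_bot"
  shows "inf a b = bot \<Longrightarrow> a' \<le> a \<Longrightarrow> b' \<le> b \<Longrightarrow> inf a' b' = bot"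
  by (metis bot_unique inf_mono)

locale frame =
  fixes type :: "'a::complete_lattice itself"
  assumes frame_law: "frame_law type"
begin

lemma inf_Sup_distrib: "inf (x::'a) (Sup S) = (SUP s\<in>S. inf x s)"
  using frame_law unfolding frame_law_def by blast

lemma inf_sup_distrib: "inf (x::'a) (sup y z) = sup (inf x y) (inf x z)"
  using inf_Sup_distrib[of x "{y, z}"] by simp

lemma inf_Sup_le_iff: "inf (x::'a) (Sup S) \<le> y \<longleftrightarrow> (\<forall>s\<in>S. inf x s \<le> y)"
  by (simp add: inf_Sup_distrib SUP_le_iff)

lemma inf_Sup_eq_bot_iff: "inf (x::'a) (Sup S) = bot \<longleftrightarrow> (\<forall>s\<in>S. inf x s = bot)"
  using inf_Sup_le_iff[of x S bot] by (simp add: bot_unique)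

lemma Sup_inf_Sup_eq_bot:
  assumes "\<And>x y. x \<in> A \<Longrightarrow> y \<in> B \<Longrightarrow> inf (x::'a) y = bot"
  shows "inf (Sup A) (Sup B) = bot"
proof -
  have "inf (Sup B) x = bot" if "x \<in> A" for x
    using assms that by (simp add: inf_commute[of "Sup B"] inf_Sup_eq_bot_iff)
  then show ?thesis
    by (simp add: inf_commute[of "Sup A"] inf_Sup_eq_bot_iff)
qed

lemma le_fimp_iff: "(x::'a) \<le> fimp a b \<longleftrightarrow> inf x a \<le> b"
proof
  assume "x \<le> fimp a b"
  then have "inf x a \<le> inf a (fimp a b)"
    by (meson inf_le1 inf_le2 le_inf_iff order_trans)
  also have "\<dots> \<le> b"
    unfolding fimp_def inf_Sup_le_iff by (simp add: inf_commute)
  finally show "inf x a \<le> b" .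
qed (simp add: fimp_def Sup_upper)

lemma le_pcompl_iff: "(x::'a) \<le> pcompl a \<longleftrightarrow> inf x a = bot"
proof -
  have "pcompl a = fimp a bot"
    unfolding pcompl_def fimp_def by (simp add: bot_unique)
  then show ?thesis
    by (simp add: le_fimp_iff bot_unique)
qed

lemma inf_pcompl: "inf (a::'a) (pcompl a) = bot"
  using le_pcompl_iff[of "pcompl a" a] by (simp add: inf_commute)

lemma pcompl_antimono: "(a::'a) \<le> b \<Longrightarrow> pcompl b \<le> pcompl a"
  by (metis inf_pcompl inf_commute inf_mono order_refl le_pcompl_iff bot_unique)

lemma le_pcompl_pcompl: "(a::'a) \<le> pcompl (pcompl a)"
  by (simp add: le_pcompl_iff inf_pcompl)

lemma pcompl_pcompl_pcompl: "pcompl (pcompl (pcompl (a::'a))) = pcompl a"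
  by (simp add: antisym le_pcompl_pcompl pcompl_antimono)

lemma inf_pcompl_pcompl_le: "inf (x::'a) (pcompl (pcompl y)) \<le> pcompl (pcompl (inf x y))"
proof -
  have "inf (pcompl (inf x y)) x \<le> pcompl y"
    using inf_pcompl[of "inf x y"] by (simp add: le_pcompl_iff ac_simps)
  then have "inf (inf (pcompl (inf x y)) x) (pcompl (pcompl y)) = bot"
    by (meson le_pcompl_iff le_infI1 le_pcompl_pcompl order_trans pcompl_antimono)
  then show ?thesis
    by (simp add: le_pcompl_iff ac_simps)
qed

lemma pcompl_pcompl_le_if_sup_pcompl_eq_top:
  assumes "sup a (pcompl x) = (top::'a)"
  shows "pcompl (pcompl x) \<le> a"
proof -
  have "pcompl (pcompl x) = inf (pcompl (pcompl x)) (sup a (pcompl x))"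
    using assms by simp
  also have "\<dots> = inf (pcompl (pcompl x)) a"
    using inf_pcompl[of "pcompl x"] by (simp add: inf_sup_distrib inf_commute)
  finally show ?thesis
    by (metis inf_le2)
qed

lemma le_if_inf_pcompl_eq_bot:
  assumes "sup x (pcompl x) = (top::'a)" and "inf y (pcompl x) = bot"
  shows "y \<le> x"
  using assms le_pcompl_iff pcompl_pcompl_le_if_sup_pcompl_eq_top order_trans by blast

lemma sup_pcompl_eq_top_if_inf_eq_bot:
  assumes "extremally_disconnected TYPE('a)" and "inf u v = (bot::'a)"
  shows "sup (pcompl u) (pcompl v) = top"
proof -
  have "v \<le> pcompl u"
    using assms(2) by (simp add: le_pcompl_iff inf_commute)
  then have "pcompl (pcompl u) \<le> pcompl v"
    by (rule pcompl_antimono)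
  moreover have "sup (pcompl u) (pcompl (pcompl u)) = top"
    using assms(1) unfolding extremally_disconnected_def by blast
  ultimately show ?thesis
    by (metis sup_mono order_refl top_unique)
qed

lemma eq_top_if_disjoint_pair_meets_all:
  assumes "extremally_disconnected TYPE('a)" and "inf U V = (bot::'a)"
    and meets: "\<And>w. \<not> w \<le> h \<Longrightarrow> inf w U \<noteq> bot \<and> inf w V \<noteq> bot"
  shows "h = top"
proof -
  have "pcompl U \<le> h" "pcompl V \<le> h"
    using meets[of "pcompl U"] meets[of "pcompl V"] inf_pcompl[of U] inf_pcompl[of V]
    by (auto simp: inf_commute)
  then have "sup (pcompl U) (pcompl V) \<le> h"
    by simp
  then show ?thesis
    using sup_pcompl_eq_top_if_inf_eq_bot[OF assms(1,2)] by (simp add: top_unique)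
qed

end

definition escapes :: "(nat \<Rightarrow> 'a::complete_lattice) \<Rightarrow> 'a \<Rightarrow> bool" where
  "escapes g w \<longleftrightarrow> (\<forall>M. \<exists>M'. inf (inf w (pcompl (g M))) (g M') \<noteq> bot)"

definition complemented_exhaustion :: "(nat \<Rightarrow> 'a::complete_lattice) \<Rightarrow> 'a \<Rightarrow> bool" where
  "complemented_exhaustion g a \<longleftrightarrow>
     mono g \<and> (\<forall>m. sup (g m) (pcompl (g m)) = top) \<and> (SUP m. g m) = a"

lemma (in frame) escapes_if_not_le_fimp:
  assumes exhaustion: "complemented_exhaustion g a"
    and not_le: "\<not> w \<le> fimp (pcompl (pcompl a)) (a::'a)"
  shows "escapes g w"
  unfolding escapes_def
proof (rule allI, rule ccontr)
  fix M
  assume "\<not> (\<exists>M'. inf (inf w (pcompl (g M))) (g M') \<noteq> bot)"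
  then have "inf (inf w (pcompl (g M))) a = bot"
    using exhaustion unfolding complemented_exhaustion_def by (auto simp: inf_Sup_eq_bot_iff)
  then have "inf w a \<le> g M"
    using exhaustion unfolding complemented_exhaustion_def
    by (intro le_if_inf_pcompl_eq_bot) (auto simp: ac_simps)
  then have "pcompl (pcompl (inf w a)) \<le> pcompl (pcompl (g M))"
    by (intro pcompl_antimono)
  also have "\<dots> \<le> g M"
    using exhaustion unfolding complemented_exhaustion_def
    by (intro pcompl_pcompl_le_if_sup_pcompl_eq_top) blast
  also have "\<dots> \<le> a"
    using exhaustion unfolding complemented_exhaustion_def by (metis SUP_upper UNIV_I)
  finally have "inf w (pcompl (pcompl a)) \<le> a"
    using inf_pcompl_pcompl_le order_trans by blast
  then show False
    using not_le le_fimp_iff by blast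
qed

definition splits :: "(nat \<Rightarrow> 'a::complete_lattice) \<Rightarrow> 'a \<Rightarrow> 'a \<Rightarrow> 'a \<Rightarrow> 'a \<Rightarrow> bool" where
  "splits g E \<phi> u v \<longleftrightarrow> u \<noteq> bot \<and> v \<noteq> bot \<and> inf u v = bot \<and> sup u v \<le> \<phi>
     \<and> inf (sup u v) E = bot \<and> (\<exists>N. sup u v \<le> g N)"

context frame
begin

lemma exists_splits:
  assumes "mono g" and "escapes g \<phi>" and "inf \<phi> E \<le> g M"
  shows "\<exists>u v. splits g E \<phi> u (v::'a)"
proof -
  obtain M1 where M1: "inf (inf \<phi> (pcompl (g M))) (g M1) \<noteq> bot"
    using assms(2) unfolding escapes_def by blast
  define M' where "M' = max M M1"
  obtain M2 where M2: "inf (inf \<phi> (pcompl (g M'))) (g M2) \<noteq> bot"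
    using assms(2) unfolding escapes_def by blast
  define u where "u = inf (inf \<phi> (pcompl (g M))) (g M1)"
  define v where "v = inf (inf \<phi> (pcompl (g M'))) (g M2)"
  have levels: "g M \<le> g M'" "g M1 \<le> g M'"
    using \<open>mono g\<close> unfolding M'_def by (simp_all add: monoD)
  have uE: "inf u E \<le> inf \<phi> E" and vE: "inf v E \<le> inf \<phi> E"
    unfolding u_def v_def by (auto intro: inf_mono le_infI1)
  have "inf u E \<le> g M" "inf v E \<le> g M'"
    using order_trans[OF uE assms(3)] order_trans[OF vE order_trans[OF assms(3) levels(1)]] .
  moreover have "inf u E \<le> pcompl (g M)" "inf v E \<le> pcompl (g M')"
    unfolding u_def v_def by (simp_all add: le_infI1)
  ultimately have "inf u E \<le> inf (g M) (pcompl (g M))" "inf v E \<le> inf (g M') (pcompl (g M'))"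
    by simp_all
  moreover have "inf u v \<le> inf (g M') (pcompl (g M'))"
    unfolding u_def v_def using levels by (auto intro: le_infI1 le_infI2 order_trans)
  ultimately have disjoint: "inf u E = bot" "inf v E = bot" "inf u v = bot"
    by (simp_all add: inf_pcompl bot_unique)
  have "inf (sup u v) E = bot"
    using disjoint by (simp add: inf_commute[of "sup u v"] inf_sup_distrib inf_commute[of E])
  moreover have "sup u v \<le> \<phi>"
    unfolding u_def v_def by (simp add: le_infI1)
  moreover have "sup u v \<le> g (max M1 M2)"
    unfolding u_def v_def using \<open>mono g\<close> by (auto intro: le_infI2 order_trans simp: monoD)
  ultimately have "splits g E \<phi> u v"
    unfolding splits_def using M1[folded u_def] M2[folded v_def] disjoint(3) by blast
  then show ?thesis
    by blast
qed

lemma inf_SUP_le_if_meets_at_most_one: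
  assumes below: "\<And>\<phi>. \<phi> \<in> F \<Longrightarrow> f \<phi> \<le> (\<phi>::'a)"
    and bounded: "\<And>\<phi>. \<phi> \<in> F \<Longrightarrow> \<exists>M. f \<phi> \<le> g M"
    and unique: "\<And>\<phi> \<phi>'. \<phi> \<in> F \<Longrightarrow> \<phi>' \<in> F \<Longrightarrow> inf \<psi> \<phi> \<noteq> bot \<Longrightarrow> inf \<psi> \<phi>' \<noteq> bot \<Longrightarrow> \<phi> = \<phi>'"
  shows "\<exists>M. inf \<psi> (SUP \<phi>\<in>F. f \<phi>) \<le> g M"
proof -
  obtain M where M: "\<And>\<phi>. \<phi> \<in> F \<Longrightarrow> inf \<psi> \<phi> \<noteq> bot \<Longrightarrow> f \<phi> \<le> g M"
    using bounded unique by metis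
  have "inf \<psi> (f \<phi>) \<le> g M" if "\<phi> \<in> F" for \<phi>
  proof (cases "inf \<psi> \<phi> = bot")
    case True
    then show ?thesis
      using below[OF that] by (metis bot_least bot_unique inf_mono order_refl)
  next
    case False
    then show ?thesis
      using M[OF that] by (auto intro: le_infI2)
  qed
  then show ?thesis
    by (auto simp: inf_Sup_le_iff)
qed

end

definition near :: "('a::complete_lattice \<Rightarrow> ennreal) \<Rightarrow> real \<Rightarrow> 'a \<Rightarrow> 'a \<Rightarrow> bool" where
  "near d \<epsilon> x y \<longleftrightarrow> (\<exists>c. d c < ennreal \<epsilon> \<and> inf c x \<noteq> bot \<and> inf c y \<noteq> bot)"

lemma exists_maximal_pairwise_subset:
  "\<exists>F\<subseteq>S. pairwise R F \<and> (\<forall>s\<in>S. pairwise R (insert s F) \<longrightarrow> s \<in> F)"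
proof -
  let ?A = "{F. F \<subseteq> S \<and> pairwise R F}"
  have "\<exists>F\<in>?A. \<forall>X\<in>?A. F \<subseteq> X \<longrightarrow> X = F"
    by (rule Zorn_Lemma) (auto simp: chains_def intro: pairwise_chain_Union)
  then show ?thesis
    by (metis (no_types, lifting) insert_subset mem_Collect_eq subset_insertI insertI1)
qed

lemma exists_maximal_separated:
  assumes "\<And>s. s \<in> S \<Longrightarrow> s \<noteq> bot \<and> d s < ennreal \<epsilon>"
  shows "\<exists>\<Phi>\<subseteq>S. pairwise (\<lambda>x y. \<not> near d \<epsilon> x y) \<Phi> \<and> (\<forall>s\<in>S. \<exists>\<phi>\<in>\<Phi>. near d \<epsilon> s \<phi>)"
proof -
  obtain \<Phi> where \<Phi>: "\<Phi> \<subseteq> S" "pairwise (\<lambda>x y. \<not> near d \<epsilon> x y) \<Phi>"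
    and maximal: "\<And>s. s \<in> S \<Longrightarrow> pairwise (\<lambda>x y. \<not> near d \<epsilon> x y) (insert s \<Phi>) \<Longrightarrow> s \<in> \<Phi>"
    using exists_maximal_pairwise_subset by metis
  have "\<exists>\<phi>\<in>\<Phi>. near d \<epsilon> s \<phi>" if "s \<in> S" for s
  proof (cases "s \<in> \<Phi>")
    case True
    then show ?thesis
      using assms[OF that] unfolding near_def by (intro bexI[of _ s] exI[of _ s]) auto
  next
    case False
    then show ?thesis
      using maximal[OF that] \<Phi>(2) unfolding pairwise_insert near_def by (auto simp: inf_commute)
  qed
  then show ?thesis
    using \<Phi> by blast
qed

locale escaping_tower =
  fixes d :: "'a::complete_lattice \<Rightarrow> ennreal" and g :: "nat \<Rightarrow> 'a"
    and r :: "nat \<Rightarrow> real" and \<Phi> :: "nat \<Rightarrow> 'a set"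
  assumes frame_law: "frame_law TYPE('a)"
    and mono_g: "mono g"
    and radius_decreasing: "r (Suc k) \<le> r k"
    and separated: "pairwise (\<lambda>x y. \<not> near d (r k) x y) (\<Phi> k)"
    and small: "\<phi> \<in> \<Phi> k \<Longrightarrow> d \<phi> < ennreal (r k)"
    and escapes: "\<phi> \<in> \<Phi> k \<Longrightarrow> escapes g \<phi>"

sublocale escaping_tower \<subseteq> frame "TYPE('a)"
  by unfold_locales (rule frame_law)

context escaping_tower
begin

lemma meets_at_most_one:
  assumes "\<phi> \<in> \<Phi> k" "\<phi>' \<in> \<Phi> k" "d \<psi> < ennreal (r k)" "inf \<psi> \<phi> \<noteq> bot" "inf \<psi> \<phi>' \<noteq> bot"
  shows "\<phi> = \<phi>'"
  using assms separated[of k] unfolding pairwise_def near_def by blast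

lemma inf_members_eq_bot: "\<phi> \<in> \<Phi> k \<Longrightarrow> \<phi>' \<in> \<Phi> k \<Longrightarrow> \<phi> \<noteq> \<phi>' \<Longrightarrow> inf \<phi> \<phi>' = bot"
  using meets_at_most_one[of \<phi> k \<phi>' \<phi>] small by force

definition split :: "'a \<Rightarrow> 'a \<Rightarrow> 'a \<times> 'a" where
  "split E \<phi> = (SOME p. splits g E \<phi> (fst p) (snd p))"

primrec stage :: "nat \<Rightarrow> 'a \<times> 'a" where
  "stage 0 = (bot, bot)"
| "stage (Suc k) =
    (sup (fst (stage k)) (SUP \<phi>\<in>\<Phi> k. fst (split (sup (fst (stage k)) (snd (stage k))) \<phi>)),
     sup (snd (stage k)) (SUP \<phi>\<in>\<Phi> k. snd (split (sup (fst (stage k)) (snd (stage k))) \<phi>)))"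

abbreviation covered :: "nat \<Rightarrow> 'a" where
  "covered k \<equiv> sup (fst (stage k)) (snd (stage k))"

abbreviation left_piece :: "nat \<Rightarrow> 'a \<Rightarrow> 'a" where
  "left_piece k \<phi> \<equiv> fst (split (covered k) \<phi>)"

abbreviation right_piece :: "nat \<Rightarrow> 'a \<Rightarrow> 'a" where
  "right_piece k \<phi> \<equiv> snd (split (covered k) \<phi>)"

text \<open>Local boundedness is what lets the pieces of stage k avoid everything covered before:
  a member of \<Phi> k is small, so it meets the covered part only below some level of g.\<close>

definition locally_bounded :: "nat \<Rightarrow> bool" where
  "locally_bounded k \<longleftrightarrow> (\<forall>\<psi>. d \<psi> < ennreal (r k) \<longrightarrow> (\<exists>M. inf \<psi> (covered k) \<le> g M))"

lemma splits_pieces: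
  assumes "locally_bounded k" and "\<phi> \<in> \<Phi> k"
  shows "splits g (covered k) \<phi> (left_piece k \<phi>) (right_piece k \<phi>)"
proof -
  obtain M where "inf \<phi> (covered k) \<le> g M"
    using assms small unfolding locally_bounded_def by blast
  then have "\<exists>p. splits g (covered k) \<phi> (fst p) (snd p)"
    using exists_splits[OF mono_g escapes[OF assms(2)]] by fastforce
  then show ?thesis
    unfolding split_def by (rule someI_ex)
qed

lemma inf_left_right_piece_eq_bot:
  assumes "locally_bounded k" and "\<phi> \<in> \<Phi> k" and "\<phi>' \<in> \<Phi> k"
  shows "inf (left_piece k \<phi>) (right_piece k \<phi>') = bot"
proof (cases "\<phi> = \<phi>'")
  case True
  then show ?thesis
    using splits_pieces[OF assms(1,2)] unfolding splits_def by simp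
next
  case False
  have "left_piece k \<phi> \<le> \<phi>" "right_piece k \<phi>' \<le> \<phi>'"
    using splits_pieces[OF assms(1,2)] splits_pieces[OF assms(1,3)] unfolding splits_def by simp_all
  then show ?thesis
    by (rule inf_le_eq_bot[OF inf_members_eq_bot[OF assms(2,3) False]])
qed

lemma inf_pieces_covered_eq_bot:
  "locally_bounded k \<Longrightarrow> \<phi> \<in> \<Phi> k \<Longrightarrow> inf (sup (left_piece k \<phi>) (right_piece k \<phi>)) (covered k) = bot"
  using splits_pieces unfolding splits_def by blast

lemma stage_Suc_disjoint:
  assumes "inf (fst (stage k)) (snd (stage k)) = bot" and "locally_bounded k"
  shows "inf (fst (stage (Suc k))) (snd (stage (Suc k))) = bot"
proof -
  have "inf x y = bot"
    if "x \<in> insert (fst (stage k)) (left_piece k ` \<Phi> k)"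
      and "y \<in> insert (snd (stage k)) (right_piece k ` \<Phi> k)" for x y
    using that
  proof (elim insertE imageE)
    fix \<phi> \<phi>' assume "x = left_piece k \<phi>" "\<phi> \<in> \<Phi> k" "y = right_piece k \<phi>'" "\<phi>' \<in> \<Phi> k"
    then show "inf x y = bot"
      using inf_left_right_piece_eq_bot[OF assms(2)] by simp
  next
    fix \<phi> assume "x = fst (stage k)" "y = right_piece k \<phi>" "\<phi> \<in> \<Phi> k"
    then show "inf x y = bot"
      using inf_le_eq_bot[OF inf_pieces_covered_eq_bot[OF assms(2) \<open>\<phi> \<in> \<Phi> k\<close>] sup_ge2 sup_ge1]
      by (simp add: inf_commute)
  next
    fix \<phi> assume "y = snd (stage k)" "x = left_piece k \<phi>" "\<phi> \<in> \<Phi> k"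
    then show "inf x y = bot"
      using inf_le_eq_bot[OF inf_pieces_covered_eq_bot[OF assms(2) \<open>\<phi> \<in> \<Phi> k\<close>] sup_ge1 sup_ge2]
      by simp
  qed (use assms(1) in simp)
  then have "inf (Sup (insert (fst (stage k)) (left_piece k ` \<Phi> k)))
      (Sup (insert (snd (stage k)) (right_piece k ` \<Phi> k))) = bot"
    by (rule Sup_inf_Sup_eq_bot)
  then show ?thesis
    by simp
qed

lemma covered_Suc:
  "covered (Suc k) = sup (covered k) (SUP \<phi>\<in>\<Phi> k. sup (left_piece k \<phi>) (right_piece k \<phi>))"
  by (simp add: Complete_Lattices.SUP_sup_distrib[symmetric] ac_simps)

lemma locally_bounded_Suc:
  assumes "locally_bounded k"
  shows "locally_bounded (Suc k)"
  unfolding locally_bounded_def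
proof (intro allI impI)
  fix \<psi>
  assume "d \<psi> < ennreal (r (Suc k))"
  then have small_\<psi>: "d \<psi> < ennreal (r k)"
    using radius_decreasing by (meson ennreal_leI order_less_le_trans)
  obtain M0 where M0: "inf \<psi> (covered k) \<le> g M0"
    using assms small_\<psi> unfolding locally_bounded_def by blast
  have "\<exists>M. inf \<psi> (SUP \<phi>\<in>\<Phi> k. sup (left_piece k \<phi>) (right_piece k \<phi>)) \<le> g M"
  proof (rule inf_SUP_le_if_meets_at_most_one)
    fix \<phi> assume "\<phi> \<in> \<Phi> k"
    with splits_pieces[OF assms this]
    show "sup (left_piece k \<phi>) (right_piece k \<phi>) \<le> \<phi>"
      and "\<exists>M. sup (left_piece k \<phi>) (right_piece k \<phi>) \<le> g M"
      unfolding splits_def by blast+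
  qed (use meets_at_most_one small_\<psi> in blast)
  then obtain M1 where M1: "inf \<psi> (SUP \<phi>\<in>\<Phi> k. sup (left_piece k \<phi>) (right_piece k \<phi>)) \<le> g M1"
    by blast
  have "g M0 \<le> g (max M0 M1)" "g M1 \<le> g (max M0 M1)"
    using mono_g by (simp_all add: monoD)
  then have "inf \<psi> (covered (Suc k)) \<le> g (max M0 M1)"
    using M0 M1 unfolding covered_Suc inf_sup_distrib by (auto intro: order_trans)
  then show "\<exists>M. inf \<psi> (covered (Suc k)) \<le> g M" ..
qed

lemma stage_invariant: "inf (fst (stage k)) (snd (stage k)) = bot \<and> locally_bounded k"
proof (induction k)
  case 0
  show ?case
    by (simp add: locally_bounded_def)
next
  case (Suc k)
  then show ?case
    using stage_Suc_disjoint locally_bounded_Suc by blast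
qed

lemma mono_stage: "mono (\<lambda>k. fst (stage k))" "mono (\<lambda>k. snd (stage k))"
  by (simp_all add: mono_iff_le_Suc)

theorem exists_disjoint_pair_meeting_members:
  "\<exists>U V. inf U V = bot \<and> (\<forall>k. \<forall>\<phi>\<in>\<Phi> k. inf \<phi> U \<noteq> bot \<and> inf \<phi> V \<noteq> bot)"
proof (intro exI conjI allI ballI)
  let ?U = "SUP k. fst (stage k)" and ?V = "SUP k. snd (stage k)"
  show "inf ?U ?V = bot"
  proof (rule Sup_inf_Sup_eq_bot)
    fix x y assume "x \<in> range (\<lambda>k. fst (stage k))" "y \<in> range (\<lambda>k. snd (stage k))"
    then obtain i j where "x = fst (stage i)" "y = snd (stage j)"
      by blast
    then show "inf x y = bot"
      using stage_invariant[of "max i j"] mono_stage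
      by (auto elim!: inf_le_eq_bot intro: monoD)
  qed
  fix k \<phi> assume "\<phi> \<in> \<Phi> k"
  have piece: "left_piece k \<phi> \<noteq> bot" "right_piece k \<phi> \<noteq> bot"
    "left_piece k \<phi> \<le> \<phi>" "right_piece k \<phi> \<le> \<phi>"
    using splits_pieces[OF conjunct2[OF stage_invariant] \<open>\<phi> \<in> \<Phi> k\<close>] unfolding splits_def by auto
  have "left_piece k \<phi> \<le> fst (stage (Suc k))" "right_piece k \<phi> \<le> snd (stage (Suc k))"
    using \<open>\<phi> \<in> \<Phi> k\<close> by (auto intro: le_supI2 SUP_upper)
  moreover have "fst (stage (Suc k)) \<le> ?U" "snd (stage (Suc k)) \<le> ?V"
    by (rule SUP_upper, simp)+
  ultimately have "left_piece k \<phi> \<le> inf \<phi> ?U" "right_piece k \<phi> \<le> inf \<phi> ?V"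
    using piece(3,4) order_trans le_inf_iff by blast+
  then show "inf \<phi> ?U \<noteq> bot" "inf \<phi> ?V \<noteq> bot"
    using piece(1,2) by (metis bot_unique)+
qed

end

definition shrink :: "('a::complete_lattice \<Rightarrow> ennreal) \<Rightarrow> real \<Rightarrow> 'a \<Rightarrow> 'a" where
  "shrink d \<epsilon> a = Sup {b. wbelow d \<epsilon> b a}"

lemma wbelow_mono: "wbelow d \<epsilon> b a \<Longrightarrow> \<epsilon>' \<le> \<epsilon> \<Longrightarrow> wbelow d \<epsilon>' b a"
  unfolding wbelow_def using ennreal_leI order_less_le_trans by blast

lemma shrink_antimono: "\<epsilon>' \<le> \<epsilon> \<Longrightarrow> shrink d \<epsilon> a \<le> shrink d \<epsilon>' a"
  unfolding shrink_def by (rule Sup_subset_mono) (auto intro: wbelow_mono)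

lemma exists_twice_inverse_Suc_le: "0 < \<epsilon> \<Longrightarrow> \<exists>k. 2 * (1 / real (Suc k)) \<le> \<epsilon>"
proof -
  assume "0 < \<epsilon>"
  obtain k :: nat where "2 / \<epsilon> < real k"
    using reals_Archimedean2 by blast
  then have "2 \<le> \<epsilon> * real (Suc k)"
    using \<open>0 < \<epsilon>\<close> by (simp add: field_simps)
  then show ?thesis
    by (intro exI[of _ k]) (simp add: field_simps)
qed

locale metric_frame =
  fixes d :: "'a::complete_lattice \<Rightarrow> ennreal"
  assumes metric_locale: "metric_locale d"

sublocale metric_frame \<subseteq> frame "TYPE('a)"
  using metric_locale unfolding metric_locale_def by unfold_locales blast

context metric_frame
begin

lemma diameter_mono: "a \<le> b \<Longrightarrow> d a \<le> d b"
  using metric_locale unfolding metric_locale_def diameter_def by blast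

lemma diameter_sup_le: "inf a b \<noteq> bot \<Longrightarrow> d (sup a b) \<le> d a + d b"
  using metric_locale unfolding metric_locale_def diameter_def by blast

lemma Sup_small_eq_top: "0 < \<epsilon> \<Longrightarrow> Sup {a. d a < ennreal \<epsilon>} = top"
  using metric_locale unfolding metric_locale_def diameter_def by blast

lemma Sup_wbelow_eq: "Sup {b. \<exists>\<epsilon>>0. wbelow d \<epsilon> b a} = a"
  using metric_locale unfolding metric_locale_def admissible_def by (metis (no_types))

lemma sup_pcompl_shrink_eq_top:
  assumes "0 < \<epsilon>"
  shows "sup a (pcompl (shrink d \<epsilon> a)) = top"
proof -
  have "c \<le> sup a (pcompl (shrink d \<epsilon> a))" if "d c < ennreal \<epsilon>" for c
  proof (cases "inf c (shrink d \<epsilon> a) = bot")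
    case True
    then show ?thesis
      by (simp add: le_supI2 le_pcompl_iff)
  next
    case False
    then obtain b where "wbelow d \<epsilon> b a" "inf c b \<noteq> bot"
      unfolding shrink_def inf_Sup_eq_bot_iff by blast
    then show ?thesis
      using that unfolding wbelow_def by (blast intro: le_supI1)
  qed
  then have "Sup {c. d c < ennreal \<epsilon>} \<le> sup a (pcompl (shrink d \<epsilon> a))"
    by (blast intro: Sup_least)
  then show ?thesis
    using Sup_small_eq_top[OF assms] by (simp add: top_unique)
qed

lemma le_SUP_shrink: "a \<le> (SUP m. shrink d (1 / real (Suc m)) a)"
proof -
  have "b \<le> (SUP m. shrink d (1 / real (Suc m)) a)" if "0 < \<epsilon>" "wbelow d \<epsilon> b a" for b \<epsilon>
  proof -
    obtain m where "2 * (1 / real (Suc m)) \<le> \<epsilon>"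
      using exists_twice_inverse_Suc_le[OF \<open>0 < \<epsilon>\<close>] by blast
    moreover have "0 < 1 / real (Suc m)"
      by simp
    ultimately have "wbelow d (1 / real (Suc m)) b a"
      by (intro wbelow_mono[OF that(2)]) linarith
    then have "b \<le> shrink d (1 / real (Suc m)) a"
      unfolding shrink_def by (simp add: Sup_upper)
    then show ?thesis
      by (rule SUP_upper2[OF UNIV_I])
  qed
  then have "Sup {b. \<exists>\<epsilon>>0. wbelow d \<epsilon> b a} \<le> (SUP m. shrink d (1 / real (Suc m)) a)"
    by (blast intro: Sup_least)
  then show ?thesis
    by (simp only: Sup_wbelow_eq)
qed

lemma complemented_exhaustion_shrink:
  assumes "extremally_disconnected TYPE('a)"
  shows "complemented_exhaustion (\<lambda>m. pcompl (pcompl (shrink d (1 / real (Suc m)) a))) a"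
  unfolding complemented_exhaustion_def
proof (intro conjI allI)
  show "mono (\<lambda>m. pcompl (pcompl (shrink d (1 / real (Suc m)) a)))"
    by (intro monoI pcompl_antimono shrink_antimono) (simp add: frac_le)
  show "sup (pcompl (pcompl (shrink d (1 / real (Suc m)) a)))
      (pcompl (pcompl (pcompl (shrink d (1 / real (Suc m)) a)))) = top" for m
    using assms unfolding extremally_disconnected_def pcompl_pcompl_pcompl by (simp add: sup_commute)
  have "pcompl (pcompl (shrink d (1 / real (Suc m)) a)) \<le> a" for m
    by (rule pcompl_pcompl_le_if_sup_pcompl_eq_top) (simp add: sup_pcompl_shrink_eq_top)
  moreover have "a \<le> (SUP m. pcompl (pcompl (shrink d (1 / real (Suc m)) a)))"
    using le_SUP_shrink by (rule order_trans) (intro SUP_mono' le_pcompl_pcompl)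
  ultimately show "(SUP m. pcompl (pcompl (shrink d (1 / real (Suc m)) a))) = a"
    by (simp add: antisym SUP_least)
qed

lemma wbelow_contains_member:
  fixes h w :: 'a
  assumes maximal: "\<And>s. \<not> s \<le> h \<Longrightarrow> d s < ennreal \<rho> \<Longrightarrow> \<exists>\<phi>\<in>\<Phi>. near d \<rho> s \<phi>"
    and small: "\<And>\<phi>. \<phi> \<in> \<Phi> \<Longrightarrow> d \<phi> < ennreal \<rho>"
    and "0 < \<rho>" and "wbelow d (2 * \<rho>) b w" and "\<not> b \<le> h"
  shows "\<exists>\<phi>\<in>\<Phi>. \<phi> \<le> w"
proof -
  have "\<not> inf b (Sup {c. d c < ennreal \<rho>}) \<le> h"
    using \<open>\<not> b \<le> h\<close> Sup_small_eq_top[OF \<open>0 < \<rho>\<close>] by simp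
  then obtain c where "d c < ennreal \<rho>" "\<not> inf b c \<le> h"
    unfolding inf_Sup_le_iff by blast
  moreover have "d (inf b c) < ennreal \<rho>"
    using diameter_mono[of "inf b c" c] \<open>d c < ennreal \<rho>\<close> by simp
  ultimately obtain \<phi> where "\<phi> \<in> \<Phi>" "near d \<rho> (inf b c) \<phi>"
    using maximal by blast
  then obtain c' where \<phi>: "\<phi> \<in> \<Phi>" "d c' < ennreal \<rho>" "inf c' (inf b c) \<noteq> bot" "inf c' \<phi> \<noteq> bot"
    unfolding near_def by blast
  have "d (sup c' \<phi>) \<le> d c' + d \<phi>"
    using \<phi>(4) by (rule diameter_sup_le)
  also have "\<dots> < ennreal \<rho> + ennreal \<rho>"
    using \<phi>(2) small[OF \<phi>(1)] by (rule add_strict_mono)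
  also have "\<dots> = ennreal (\<rho> + \<rho>)"
    using \<open>0 < \<rho>\<close> by (intro ennreal_plus[symmetric]) simp_all
  also have "\<dots> = ennreal (2 * \<rho>)"
    by (simp only: mult_2)
  finally have "d (sup c' \<phi>) < ennreal (2 * \<rho>)" .
  moreover have "inf (sup c' \<phi>) b \<noteq> bot"
  proof
    assume "inf (sup c' \<phi>) b = bot"
    moreover have "inf c' (inf b c) \<le> inf (sup c' \<phi>) b"
      by (simp add: le_infI1 le_infI2)
    ultimately show False
      using \<phi>(3) by (simp add: bot_unique)
  qed
  ultimately have "sup c' \<phi> \<le> w"
    using \<open>wbelow d (2 * \<rho>) b w\<close> unfolding wbelow_def by blast
  then show ?thesis
    using \<phi>(1) by auto
qed

lemma exists_member_below:
  fixes h w :: 'a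
  assumes maximal: "\<And>k s. \<not> s \<le> h \<Longrightarrow> d s < ennreal (1 / real (Suc k))
      \<Longrightarrow> \<exists>\<phi>\<in>\<Phi> k. near d (1 / real (Suc k)) s \<phi>"
    and small: "\<And>k \<phi>. \<phi> \<in> \<Phi> k \<Longrightarrow> d \<phi> < ennreal (1 / real (Suc k))"
    and "\<not> w \<le> h"
  shows "\<exists>k. \<exists>\<phi>\<in>\<Phi> k. \<phi> \<le> w"
proof -
  have "\<not> Sup {b. \<exists>\<epsilon>>0. wbelow d \<epsilon> b w} \<le> h"
    unfolding Sup_wbelow_eq by fact
  then obtain b \<epsilon> where "0 < \<epsilon>" "wbelow d \<epsilon> b w" "\<not> b \<le> h"
    unfolding Sup_le_iff by blast
  obtain k where "2 * (1 / real (Suc k)) \<le> \<epsilon>"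
    using exists_twice_inverse_Suc_le[OF \<open>0 < \<epsilon>\<close>] by blast
  then have wbelow: "wbelow d (2 * (1 / real (Suc k))) b w"
    by (rule wbelow_mono[OF \<open>wbelow d \<epsilon> b w\<close>])
  have "\<exists>\<phi>\<in>\<Phi> k. \<phi> \<le> w"
    using wbelow_contains_member[OF maximal[where k = k] small[where k = k] _ wbelow \<open>\<not> b \<le> h\<close>]
    by simp
  then show ?thesis ..
qed

lemma exists_disjoint_pair_meeting_all:
  fixes g :: "nat \<Rightarrow> 'a"
  assumes "mono g" and escapes: "\<And>w. \<not> w \<le> h \<Longrightarrow> escapes g w"
  shows "\<exists>U V. inf U V = bot \<and> (\<forall>w. \<not> w \<le> h \<longrightarrow> inf w U \<noteq> bot \<and> inf w V \<noteq> bot)"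
proof -
  define r where "r k = 1 / real (Suc k)" for k
  define S where "S k = {s. \<not> s \<le> h \<and> d s < ennreal (r k)}" for k
  have "\<exists>\<Phi>\<subseteq>S k. pairwise (\<lambda>x y. \<not> near d (r k) x y) \<Phi> \<and> (\<forall>s\<in>S k. \<exists>\<phi>\<in>\<Phi>. near d (r k) s \<phi>)"
    for k
    by (rule exists_maximal_separated) (auto simp: S_def)
  then obtain \<Phi> where \<Phi>: "\<And>k. \<Phi> k \<subseteq> S k"
    "\<And>k. pairwise (\<lambda>x y. \<not> near d (r k) x y) (\<Phi> k)" "\<And>k. \<forall>s\<in>S k. \<exists>\<phi>\<in>\<Phi> k. near d (r k) s \<phi>"
    by metis
  interpret escaping_tower d g r \<Phi>
  proof
    show "r (Suc k) \<le> r k" for k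
      unfolding r_def by (simp add: frac_le)
    show "escapes g \<phi>" if "\<phi> \<in> \<Phi> k" for \<phi> k
      using that \<Phi>(1) escapes unfolding S_def by blast
  qed (use frame_law \<open>mono g\<close> \<Phi> in \<open>auto simp: S_def\<close>)
  obtain U V where "inf U V = bot" and meets: "\<forall>k. \<forall>\<phi>\<in>\<Phi> k. inf \<phi> U \<noteq> bot \<and> inf \<phi> V \<noteq> bot"
    using exists_disjoint_pair_meeting_members by blast
  have "inf w U \<noteq> bot \<and> inf w V \<noteq> bot" if "\<not> w \<le> h" for w
  proof -
    have "\<exists>k. \<exists>\<phi>\<in>\<Phi> k. \<phi> \<le> w"
    proof (rule exists_member_below[OF _ _ that])
      show "\<exists>\<phi>\<in>\<Phi> k. near d (1 / real (Suc k)) s \<phi>"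
        if "\<not> s \<le> h" "d s < ennreal (1 / real (Suc k))" for k s
        using \<Phi>(3) that unfolding S_def r_def by blast
      show "d \<phi> < ennreal (1 / real (Suc k))" if "\<phi> \<in> \<Phi> k" for k \<phi>
        using \<Phi>(1) that unfolding S_def r_def by blast
    qed
    then obtain k \<phi> where "\<phi> \<in> \<Phi> k" "\<phi> \<le> w"
      by blast
    then show ?thesis
      using meets by (metis inf_le_eq_bot order_refl)
  qed
  then show ?thesis
    using \<open>inf U V = bot\<close> by blast
qed

theorem pcompl_pcompl_le_if_extremally_disconnected:
  fixes a :: 'a
  assumes "extremally_disconnected TYPE('a)"
  shows "pcompl (pcompl a) \<le> a"
proof -
  let ?g = "\<lambda>m. pcompl (pcompl (shrink d (1 / real (Suc m)) a))"
  let ?h = "fimp (pcompl (pcompl a)) a"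
  have "complemented_exhaustion ?g a"
    using assms by (rule complemented_exhaustion_shrink)
  then obtain U V where "inf U V = bot" "\<And>w. \<not> w \<le> ?h \<Longrightarrow> inf w U \<noteq> bot \<and> inf w V \<noteq> bot"
    using exists_disjoint_pair_meeting_all[of ?g ?h] escapes_if_not_le_fimp
    unfolding complemented_exhaustion_def by blast
  then have "?h = top"
    using assms by (intro eq_top_if_disjoint_pair_meets_all)
  then show ?thesis
    using le_fimp_iff[of top "pcompl (pcompl a)" a] by simp
qed

end

theorem corollary5p7:
  fixes d :: "'a::complete_lattice \<Rightarrow> ennreal"
  assumes "metric_locale d"
    and "\<forall>p::'a. \<not> isolated_point p"
    and "extremally_disconnected TYPE('a)"
  shows "boolean_frame TYPE('a)"
  unfolding boolean_frame_def
proof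
  fix a :: 'a
  interpret metric_frame d
    using assms(1) by unfold_locales
  have "sup (pcompl a) (pcompl (pcompl a)) = top"
    using assms(3) unfolding extremally_disconnected_def by blast
  then have "top \<le> sup (pcompl a) a"
    using pcompl_pcompl_le_if_extremally_disconnected[OF assms(3)] by (metis sup_mono order_refl)
  then show "sup a (pcompl a) = top"
    by (simp add: top_unique sup_commute)
qed

end
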